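(* $\mathfrak{L}(\mathrm{rtDVA}(1))\subsetneq\mathfrak{L}(\mathrm{rtDVA}(2))$.
   Context: $\mathfrak{L}(A)$ denotes the class of languages recognized by machines of type $A$. A real-time deterministic vector automaton of dimension $k$ ($\mathrm{rtDVA}(k)$) is a 6-tuple $(Q,\Sigma,\delta,q_0,Q_a,v)$ with finite state set $Q$, initial state $q_0$, accept states $Q_a$, initial row vector $v\in\mathbb{Q}^k$ (freely chosen), and $\delta:Q\times(\Sigma\cup\{\cent,\$\})\times\{=,\neq\}\to Q\times S$, $S$ the set of $k\times k$ rational matrices. The input $w$ is read as $\cent w\$$ left to right, one symbol per step; in state $q$ reading $\sigma$, with $\omega$ equal to "$=$" iff the first vector entry equals $1$, if $\delta(q,\sigma,\omega)=(q',M)$ the machine goes to $q'$ and multiplies its row vector on the right by $M$. Acceptance: after processing $\$$, the state is in $Q_a$ and the first vector entry equals $1$. *)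

theory Defs
  imports Main "Jordan_Normal_Form.Matrix"
begin

text \<open>Tape symbols: input letters (alphabet letters are natural numbers, an
alphabet is a finite set of them), the left end-marker cent and the right
end-marker dollar.\<close>
datatype tsym = Sym nat | Cent | Dollar

text \<open>The transition function takes a state, a tape symbol and a Boolean which is
True iff the first vector entry equals 1 (the "=" outcome).\<close>
record rtdva =
  states :: "nat set"
  delta  :: "nat \<Rightarrow> tsym \<Rightarrow> bool \<Rightarrow> nat \<times> rat mat"
  init   :: nat
  accs   :: "nat set"
  ivec   :: "rat vec"

definition is_rtDVA :: "nat \<Rightarrow> nat set \<Rightarrow> rtdva \<Rightarrow> bool" where
  "is_rtDVA k Sg M \<longleftrightarrow>
     finite (states M) \<and> init M \<in> states M \<and> accs M \<subseteq> states M \<and>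
     ivec M \<in> carrier_vec k \<and>
     (\<forall>q \<in> states M. \<forall>s \<in> Sym ` Sg \<union> {Cent, Dollar}. \<forall>b.
        fst (delta M q s b) \<in> states M \<and> snd (delta M q s b) \<in> carrier_mat k k)"

text \<open>Row vector v multiplied on the right by the matrix A.\<close>
definition row_mult :: "rat vec \<Rightarrow> rat mat \<Rightarrow> rat vec" where
  "row_mult v A = transpose_mat A *\<^sub>v v"

definition step :: "rtdva \<Rightarrow> nat \<times> rat vec \<Rightarrow> tsym \<Rightarrow> nat \<times> rat vec" where
  "step M c s = (let (q, v) = c; (q', A) = delta M q s (v $ 0 = 1) in (q', row_mult v A))"

definition run :: "rtdva \<Rightarrow> nat list \<Rightarrow> nat \<times> rat vec" where
  "run M w = foldl (step M) (init M, ivec M) (Cent # map Sym w @ [Dollar])"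

definition accepts :: "rtdva \<Rightarrow> nat list \<Rightarrow> bool" where
  "accepts M w \<longleftrightarrow> fst (run M w) \<in> accs M \<and> snd (run M w) $ 0 = 1"

definition lang :: "nat set \<Rightarrow> rtdva \<Rightarrow> nat list set" where
  "lang Sg M = {w \<in> lists Sg. accepts M w}"

definition rtDVA_langs :: "nat \<Rightarrow> (nat set \<times> nat list set) set" where
  "rtDVA_langs k = {(Sg, L). finite Sg \<and> (\<exists>M. is_rtDVA k Sg M \<and> L = lang Sg M)}"

end

(*
  Padding vectors and matrices with zeros turns an rtDVA(k) into an rtDVA(n), k \<le> n, with the
  same runs on the first coordinate. For strictness, a two-dimensional automaton keeps the vector
  (x, 1), so it can apply the affine maps x \<mapsto> 2x + b for binary digits b and x \<mapsto> x - 1, and it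
  accepts iff x, starting from 1, ends at 1. After a binary word w of length n the value is the
  number 1w in binary, so appending that value minus one decrements accepts w and rejects every
  other word of length n: all 2^n such prefixes are pairwise distinguishable. A one-dimensional
  automaton, however, only multiplies its single entry by (0,0)-entries of its finitely many
  transition matrices, so after n + 1 steps it has only polynomially many configurations.
*)

theory Submission
  imports Defs
begin

abbreviation tape_alphabet :: "nat set \<Rightarrow> tsym set" where
  "tape_alphabet Sg \<equiv> Sym ` Sg \<union> {Cent, Dollar}"

lemma row_mult_carrier:
  "v \<in> carrier_vec k \<Longrightarrow> A \<in> carrier_mat k n \<Longrightarrow> row_mult v A \<in> carrier_vec n"
  by (simp add: row_mult_def)

lemma row_mult_index:
  assumes "v \<in> carrier_vec k" "A \<in> carrier_mat k n" "i < n"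
  shows "row_mult v A $ i = (\<Sum>j<k. A $$ (j, i) * v $ j)"
  using assms unfolding row_mult_def
  by (auto simp: mult_mat_vec_def scalar_prod_def atLeast0LessThan intro!: sum.cong)

lemma step_closed:
  assumes "is_rtDVA k Sg M" "s \<in> tape_alphabet Sg" "c \<in> states M \<times> carrier_vec k"
  shows "step M c s \<in> states M \<times> carrier_vec k"
  using assms unfolding is_rtDVA_def step_def
  by (auto simp: case_prod_beta intro!: row_mult_carrier)

lemma foldl_step_closed:
  assumes "is_rtDVA k Sg M" "set xs \<subseteq> tape_alphabet Sg" "c \<in> states M \<times> carrier_vec k"
  shows "foldl (step M) c xs \<in> states M \<times> carrier_vec k"
  using assms(2,3)
proof (induction xs arbitrary: c)
  case (Cons s xs)
  then show ?case using step_closed[OF assms(1), of s c] by simp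
qed simp

definition config_after :: "rtdva \<Rightarrow> nat list \<Rightarrow> nat \<times> rat vec" where
  "config_after M w = foldl (step M) (init M, ivec M) (Cent # map Sym w)"

lemma run_append: "run M (w @ z) = foldl (step M) (config_after M w) (map Sym z @ [Dollar])"
  by (simp add: run_def config_after_def)

section \<open>Embedding into higher dimensions\<close>

definition pad_vec :: "nat \<Rightarrow> 'a::zero vec \<Rightarrow> 'a vec" where
  "pad_vec n v = vec n (\<lambda>i. if i < dim_vec v then v $ i else 0)"

definition pad_mat :: "nat \<Rightarrow> 'a::zero mat \<Rightarrow> 'a mat" where
  "pad_mat n A = mat n n (\<lambda>(i, j). if i < dim_row A \<and> j < dim_col A then A $$ (i, j) else 0)"

lemma pad_vec_index_0: "0 < dim_vec v \<Longrightarrow> dim_vec v \<le> n \<Longrightarrow> pad_vec n v $ 0 = v $ 0"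
  by (simp add: pad_vec_def)

lemma row_mult_pad:
  assumes v: "v \<in> carrier_vec k" and A: "A \<in> carrier_mat k k" and "k \<le> n"
  shows "row_mult (pad_vec n v) (pad_mat n A) = pad_vec n (row_mult v A)"
proof (rule eq_vecI)
  fix i assume "i < dim_vec (pad_vec n (row_mult v A))"
  then have i: "i < n" by (simp add: pad_vec_def)
  have "row_mult (pad_vec n v) (pad_mat n A) $ i = (\<Sum>j<n. pad_mat n A $$ (j, i) * pad_vec n v $ j)"
    using i by (intro row_mult_index) (auto simp: pad_vec_def pad_mat_def)
  also have "\<dots> = (\<Sum>j<k. pad_mat n A $$ (j, i) * pad_vec n v $ j)"
    using assms by (intro sum.mono_neutral_right) (auto simp: pad_vec_def)
  also have "\<dots> = pad_vec n (row_mult v A) $ i"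
    using assms i row_mult_carrier[OF v A]
    by (cases "i < k") (auto simp: pad_vec_def pad_mat_def row_mult_index)
  finally show "row_mult (pad_vec n v) (pad_mat n A) $ i = pad_vec n (row_mult v A) $ i" .
qed (simp add: pad_vec_def pad_mat_def row_mult_def)

definition embed_rtDVA :: "nat \<Rightarrow> rtdva \<Rightarrow> rtdva" where
  "embed_rtDVA n M = M\<lparr>delta := (\<lambda>q s b. map_prod id (pad_mat n) (delta M q s b)),
                       ivec := pad_vec n (ivec M)\<rparr>"

lemma is_rtDVA_embed: "is_rtDVA k Sg M \<Longrightarrow> is_rtDVA n Sg (embed_rtDVA n M)"
  by (auto simp: is_rtDVA_def embed_rtDVA_def pad_vec_def pad_mat_def map_prod_def split_beta)

lemma step_embed:
  assumes M: "is_rtDVA k Sg M" and k: "0 < k" "k \<le> n"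
    and s: "s \<in> tape_alphabet Sg" and q: "q \<in> states M" and v: "v \<in> carrier_vec k"
  shows "step (embed_rtDVA n M) (q, pad_vec n v) s = map_prod id (pad_vec n) (step M (q, v) s)"
proof -
  have "snd (delta M q s (v $ 0 = 1)) \<in> carrier_mat k k"
    using M q s unfolding is_rtDVA_def by blast
  then show ?thesis
    using k v by (simp add: step_def embed_rtDVA_def pad_vec_index_0 row_mult_pad split_beta)
qed

lemma foldl_step_embed:
  assumes M: "is_rtDVA k Sg M" and k: "0 < k" "k \<le> n" and xs: "set xs \<subseteq> tape_alphabet Sg"
    and c: "(q, v) \<in> states M \<times> carrier_vec k"
  shows "foldl (step (embed_rtDVA n M)) (q, pad_vec n v) xs = map_prod id (pad_vec n) (foldl (step M) (q, v) xs)"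
  using xs c
proof (induction xs arbitrary: q v)
  case (Cons s xs)
  have s: "s \<in> tape_alphabet Sg" using Cons.prems(1) by simp
  obtain q' v' where step: "step M (q, v) s = (q', v')" by fastforce
  have "(q', v') \<in> states M \<times> carrier_vec k"
    using step_closed[OF M s Cons.prems(2)] step by simp
  moreover have "step (embed_rtDVA n M) (q, pad_vec n v) s = (q', pad_vec n v')"
    using step_embed[OF M k s] Cons.prems(2) step by simp
  ultimately show ?case using Cons.IH Cons.prems(1) step by simp
qed simp

lemma lang_embed:
  assumes M: "is_rtDVA k Sg M" and k: "0 < k" "k \<le> n"
  shows "lang Sg (embed_rtDVA n M) = lang Sg M"
proof -
  have accepts: "accepts (embed_rtDVA n M) w = accepts M w" if "w \<in> lists Sg" for w
  proof -
    let ?xs = "Cent # map Sym w @ [Dollar]"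
    have xs: "set ?xs \<subseteq> tape_alphabet Sg" using that by auto
    have c: "(init M, ivec M) \<in> states M \<times> carrier_vec k" using M by (simp add: is_rtDVA_def)
    have "run (embed_rtDVA n M) w = map_prod id (pad_vec n) (run M w)"
      using foldl_step_embed[OF M k xs c] by (simp add: run_def embed_rtDVA_def)
    moreover have "snd (run M w) \<in> carrier_vec k"
      using foldl_step_closed[OF M xs c] by (auto simp: run_def)
    ultimately show ?thesis
      using k by (simp add: accepts_def embed_rtDVA_def pad_vec_index_0)
  qed
  show ?thesis
    unfolding lang_def by (rule Collect_cong) (use accepts in blast)
qed

theorem rtDVA_langs_mono:
  assumes "0 < k" "k \<le> n"
  shows "rtDVA_langs k \<subseteq> rtDVA_langs n"
proof (clarsimp simp: rtDVA_langs_def)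
  fix Sg M assume "finite Sg" "is_rtDVA k Sg M"
  with assms show "\<exists>M'. is_rtDVA n Sg M' \<and> lang Sg M = lang Sg M'"
    by (metis is_rtDVA_embed lang_embed)
qed

section \<open>Configurations in dimension one\<close>

definition entry_factors :: "nat set \<Rightarrow> rtdva \<Rightarrow> rat set" where
  "entry_factors Sg M =
     (\<lambda>(q, s, b). snd (delta M q s b) $$ (0, 0)) ` (states M \<times> tape_alphabet Sg \<times> UNIV)"

definition bounded_monomials :: "'a::comm_monoid_mult set \<Rightarrow> nat \<Rightarrow> 'a set" where
  "bounded_monomials S n = (\<lambda>e. \<Prod>s\<in>S. s ^ e s) ` (S \<rightarrow>\<^sub>E {0..n})"

lemma finite_entry_factors: "is_rtDVA k Sg M \<Longrightarrow> finite Sg \<Longrightarrow> finite (entry_factors Sg M)"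
  by (simp add: entry_factors_def is_rtDVA_def)

lemma one_in_bounded_monomials: "1 \<in> bounded_monomials S n"
  unfolding bounded_monomials_def
proof (rule image_eqI[where x = "\<lambda>s\<in>S. 0"])
  show "1 = (\<Prod>s\<in>S. s ^ (\<lambda>s\<in>S. 0) s)"
    by (rule sym, rule prod.neutral) simp
qed auto

lemma mult_bounded_monomials:
  assumes S: "finite S" "m \<in> S" and p: "p \<in> bounded_monomials S n"
  shows "m * p \<in> bounded_monomials S (Suc n)"
proof -
  from p obtain e where e: "e \<in> S \<rightarrow>\<^sub>E {0..n}" and p: "p = (\<Prod>s\<in>S. s ^ e s)"
    by (auto simp: bounded_monomials_def)
  define e' where "e' = e(m := Suc (e m))"
  have "e' \<in> S \<rightarrow>\<^sub>E {0..Suc n}"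
    using e S by (auto simp: e'_def PiE_iff extensional_def)
  moreover have "(\<Prod>s\<in>S. s ^ e' s) = m ^ Suc (e m) * (\<Prod>s\<in>S - {m}. s ^ e s)"
    using S by (simp add: prod.remove e'_def)
  moreover have "p = m ^ e m * (\<Prod>s\<in>S - {m}. s ^ e s)"
    using S by (simp add: prod.remove p)
  ultimately show ?thesis
    unfolding bounded_monomials_def by (intro image_eqI[where x = e']) (simp_all add: mult.assoc)
qed

lemma finite_bounded_monomials: "finite S \<Longrightarrow> finite (bounded_monomials S n)"
  by (simp add: bounded_monomials_def finite_PiE)

lemma card_bounded_monomials:
  assumes "finite S"
  shows "card (bounded_monomials S n) \<le> Suc n ^ card S"
proof -
  have "card (bounded_monomials S n) \<le> card (S \<rightarrow>\<^sub>E {0..n})"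
    unfolding bounded_monomials_def using assms by (intro card_image_le) (simp add: finite_PiE)
  also have "\<dots> = Suc n ^ card S"
    using assms by (simp add: card_PiE)
  finally show ?thesis .
qed

lemma foldl_step_rtDVA1:
  assumes M: "is_rtDVA 1 Sg M" "finite Sg" and xs: "set xs \<subseteq> tape_alphabet Sg"
    and c: "c \<in> states M \<times> carrier_vec 1"
  shows "\<exists>p \<in> bounded_monomials (entry_factors Sg M) (length xs).
           snd (foldl (step M) c xs) $ 0 = p * snd c $ 0"
  using xs
proof (induction xs rule: rev_induct)
  case Nil
  show ?case using one_in_bounded_monomials by force
next
  case (snoc s xs)
  obtain q v where qv: "foldl (step M) c xs = (q, v)" by fastforce
  from snoc obtain p where p: "p \<in> bounded_monomials (entry_factors Sg M) (length xs)"
    and v: "v $ 0 = p * snd c $ 0" using qv by auto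
  have s: "s \<in> tape_alphabet Sg" using snoc.prems by simp
  have qv_closed: "(q, v) \<in> states M \<times> carrier_vec 1"
    using foldl_step_closed[OF M(1) _ c] snoc.prems qv by (metis le_supE set_append)
  define A where "A = snd (delta M q s (v $ 0 = 1))"
  have A: "A \<in> carrier_mat 1 1"
    using M(1) s qv_closed unfolding is_rtDVA_def A_def by blast
  have m: "A $$ (0, 0) \<in> entry_factors Sg M"
    using qv_closed s unfolding entry_factors_def A_def by force
  have "snd (foldl (step M) c (xs @ [s])) $ 0 = row_mult v A $ 0"
    using qv by (simp add: step_def A_def split_beta)
  also have "\<dots> = A $$ (0, 0) * v $ 0"
    using row_mult_index[OF _ A, of v 0] qv_closed by simp
  also have "\<dots> = (A $$ (0, 0) * p) * snd c $ 0" by (simp add: v)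
  finally show ?case
    using mult_bounded_monomials[OF finite_entry_factors[OF M] m p] by auto
qed

lemma config_after_rtDVA1:
  assumes M: "is_rtDVA 1 Sg M" "finite Sg" and w: "w \<in> lists Sg"
  shows "config_after M w \<in> states M \<times>
           (\<lambda>p. vec 1 (\<lambda>_. p * ivec M $ 0)) ` bounded_monomials (entry_factors Sg M) (Suc (length w))"
proof -
  have xs: "set (Cent # map Sym w) \<subseteq> tape_alphabet Sg" using w by auto
  have c0: "(init M, ivec M) \<in> states M \<times> carrier_vec 1"
    using M by (simp add: is_rtDVA_def)
  have closed: "config_after M w \<in> states M \<times> carrier_vec 1"
    using foldl_step_closed[OF M(1) xs c0] by (simp add: config_after_def)
  obtain p where p: "p \<in> bounded_monomials (entry_factors Sg M) (Suc (length w))"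
    and entry: "snd (config_after M w) $ 0 = p * ivec M $ 0"
    using foldl_step_rtDVA1[OF M xs c0] by (auto simp: config_after_def)
  have "snd (config_after M w) = vec 1 (\<lambda>_. p * ivec M $ 0)"
    using closed entry by (intro eq_vecI) auto
  with closed p show ?thesis
    by (auto simp: mem_Times_iff)
qed

text \<open>A Myhill--Nerode bound: pairwise distinguishable words of length \<open>n\<close> lead to
  distinct configurations, of which there are only polynomially many in \<open>n\<close>.\<close>

lemma rtDVA1_card_distinguishable:
  assumes M: "is_rtDVA 1 Sg M" "finite Sg" and W: "W \<subseteq> lists Sg" "\<forall>w\<in>W. length w = n"
    and distinguishable:
      "\<And>w1 w2. w1 \<in> W \<Longrightarrow> w2 \<in> W \<Longrightarrow> w1 \<noteq> w2 \<Longrightarrow> \<exists>z. accepts M (w1 @ z) \<noteq> accepts M (w2 @ z)"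
  shows "card W \<le> card (states M) * (n + 2) ^ card (entry_factors Sg M)"
proof -
  define V where "V = (\<lambda>p. vec 1 (\<lambda>_. p * ivec M $ 0)) ` bounded_monomials (entry_factors Sg M) (Suc n)"
  have finite_factors: "finite (entry_factors Sg M)"
    using finite_entry_factors[OF M] .
  have "inj_on (config_after M) W"
  proof (rule inj_onI, rule ccontr)
    fix w1 w2 assume w: "w1 \<in> W" "w2 \<in> W" "config_after M w1 = config_after M w2" "w1 \<noteq> w2"
    then have "run M (w1 @ z) = run M (w2 @ z)" for z
      by (simp add: run_append)
    then show False
      using distinguishable[OF w(1,2,4)] unfolding accepts_def by simp
  qed
  then have "card W = card (config_after M ` W)" by (simp add: card_image)
  also have "\<dots> \<le> card (states M \<times> V)"
  proof (rule card_mono)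
    show "finite (states M \<times> V)"
      using M(1) finite_factors by (simp add: V_def is_rtDVA_def finite_bounded_monomials)
    show "config_after M ` W \<subseteq> states M \<times> V"
    proof (rule image_subsetI)
      fix w assume "w \<in> W"
      with W show "config_after M w \<in> states M \<times> V"
        using config_after_rtDVA1[OF M, of w] by (simp add: V_def subset_iff)
    qed
  qed
  also have "\<dots> = card (states M) * card V" by (simp add: card_cartesian_product)
  also have "\<dots> \<le> card (states M) * (n + 2) ^ card (entry_factors Sg M)"
  proof -
    have "card V \<le> card (bounded_monomials (entry_factors Sg M) (Suc n))"
      unfolding V_def by (rule card_image_le[OF finite_bounded_monomials[OF finite_factors]])
    also have "\<dots> \<le> (n + 2) ^ card (entry_factors Sg M)"
      using card_bounded_monomials[OF finite_factors, of "Suc n"] by simp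
    finally show ?thesis by simp
  qed
  finally show ?thesis .
qed

text \<open>Take \<open>n = 2 ^ (2 * m)\<close> with \<open>m = c + 2 * k + 1\<close>: then
  \<open>c * (n + 2) ^ k \<le> 2 ^ (c + (2 * m + 1) * k)\<close> and that exponent is below \<open>(m + 1)\<^sup>2 \<le> 2 ^ (2 * m)\<close>.\<close>

lemma exists_pow2_gt_poly: "\<exists>n::nat. c * (n + 2) ^ k < 2 ^ n"
proof -
  define m where "m = c + 2 * k + 1"
  define j where "j = 2 * m"
  define n where "n = (2::nat) ^ j"
  have "(2::nat) \<le> 2 ^ j" unfolding j_def m_def by (simp add: self_le_power)
  then have "(n + 2) ^ k \<le> (2 ^ (j + 1)) ^ k" unfolding n_def by (intro power_mono) simp_all
  then have "c * (n + 2) ^ k \<le> 2 ^ c * (2 ^ (j + 1)) ^ k"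
    using less_exp[of c] by (intro mult_le_mono) simp_all
  also have "\<dots> = 2 ^ (c + (j + 1) * k)" by (simp add: power_add power_mult mult.commute)
  also have "\<dots> < 2 ^ n"
  proof (rule power_strict_increasing)
    have "c + (j + 1) * k < (m + 1) ^ 2"
      unfolding j_def m_def by (simp add: power2_eq_square algebra_simps)
    also have "\<dots> \<le> (2 ^ m) ^ 2"
      using less_exp[of m] by (intro power_mono) (simp_all add: Suc_le_eq)
    also have "\<dots> = n" unfolding n_def j_def by (simp add: power_mult mult.commute)
    finally show "c + (j + 1) * k < n" .
  qed simp
  finally show ?thesis by blast
qed


section \<open>A language of rtDVA(2) that no rtDVA(1) recognizes\<close>

definition counter_step :: "rat \<Rightarrow> nat \<Rightarrow> rat" where
  "counter_step x b = (if b = 2 then x - 1 else if b \<le> 1 then 2 * x + of_nat b else x)"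

definition affine_vec :: "rat \<Rightarrow> rat vec" where
  "affine_vec x = vec 2 (\<lambda>i. if i = 0 then x else 1)"

definition affine_mat :: "rat \<Rightarrow> rat \<Rightarrow> rat mat" where
  "affine_mat a c = mat 2 2 (\<lambda>(i, j). if j = 0 then (if i = 0 then a else c) else if i = 1 then 1 else 0)"

lemma row_mult_affine: "row_mult (affine_vec x) (affine_mat a c) = affine_vec (a * x + c)"
  unfolding row_mult_def affine_vec_def affine_mat_def
  by (rule eq_vecI) (auto simp: mult_mat_vec_def scalar_prod_def numeral_2_eq_2 less_Suc_eq)

definition counter_mat :: "tsym \<Rightarrow> rat mat" where
  "counter_mat s = (case s of
      Sym b \<Rightarrow> if b = 2 then affine_mat 1 (-1) else if b \<le> 1 then affine_mat 2 (of_nat b) else affine_mat 1 0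
    | _ \<Rightarrow> affine_mat 1 0)"

text \<open>The second coordinate stays 1, which makes the affine maps \<open>x \<mapsto> a x + c\<close> linear.\<close>

definition counter :: rtdva where
  "counter = \<lparr>states = {0}, delta = (\<lambda>q s b. (0, counter_mat s)), init = 0, accs = {0},
              ivec = affine_vec 1\<rparr>"

lemma is_rtDVA_counter: "is_rtDVA 2 Sg counter"
  by (simp add: is_rtDVA_def counter_def counter_mat_def affine_vec_def affine_mat_def split: tsym.split)

lemma step_counter_Sym: "step counter (0, affine_vec x) (Sym b) = (0, affine_vec (counter_step x b))"
  by (simp add: step_def counter_def counter_mat_def counter_step_def row_mult_affine)

lemma accepts_counter: "accepts counter w \<longleftrightarrow> foldl counter_step 1 w = 1"
proof -
  have marker: "step counter (0, affine_vec x) s = (0, affine_vec x)" if "s = Cent \<or> s = Dollar" for x s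
    using that by (auto simp: step_def counter_def counter_mat_def row_mult_affine)
  have letters: "foldl (step counter) (0, affine_vec x) (map Sym w) = (0, affine_vec (foldl counter_step x w))" for x
    by (induction w arbitrary: x) (simp_all add: step_counter_Sym)
  have "init counter = 0" "ivec counter = affine_vec 1" "accs counter = {0}"
    by (simp_all add: counter_def)
  then have "run counter w = (0, affine_vec (foldl counter_step 1 w))" and "accs counter = {0}"
    by (simp_all add: run_def marker letters)
  then show ?thesis by (simp add: accepts_def affine_vec_def)
qed

definition binary_value :: "nat \<Rightarrow> nat list \<Rightarrow> nat" where
  "binary_value x w = foldl (\<lambda>x b. 2 * x + b) x w"

lemma foldl_counter_step_binary:
  "set w \<subseteq> {0, 1} \<Longrightarrow> foldl counter_step (of_nat x) w = of_nat (binary_value x w)"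
proof (induction w arbitrary: x)
  case (Cons b w)
  then have "counter_step (of_nat x) b = of_nat (2 * x + b)"
    by (auto simp: counter_step_def)
  then have "foldl counter_step (of_nat x) (b # w) = foldl counter_step (of_nat (2 * x + b)) w"
    by simp
  also have "\<dots> = of_nat (binary_value (2 * x + b) w)"
    by (rule Cons.IH) (use Cons.prems in simp)
  finally show ?case by (simp add: binary_value_def)
qed (simp add: binary_value_def)

lemma foldl_counter_step_decrement: "foldl counter_step x (replicate k 2) = x - of_nat k"
proof (induction k arbitrary: x)
  case (Suc k)
  have "foldl counter_step x (replicate (Suc k) 2) = foldl counter_step (x - 1) (replicate k 2)"
    by (simp add: counter_step_def)
  also have "\<dots> = x - of_nat (Suc k)"
    by (simp add: Suc.IH)
  finally show ?case .
qed simp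

lemma le_binary_value: "x \<le> binary_value x w"
proof (induction w arbitrary: x)
  case (Cons b w)
  have "x \<le> 2 * x + b" by simp
  also have "\<dots> \<le> binary_value (2 * x + b) w" by (rule Cons.IH)
  finally show ?case by (simp add: binary_value_def)
qed (simp add: binary_value_def)

lemma binary_value_inj:
  assumes "set w1 \<subseteq> {0, 1}" "set w2 \<subseteq> {0, 1}" "length w1 = length w2"
    and "binary_value x w1 = binary_value y w2"
  shows "x = y \<and> w1 = w2"
  using assms
proof (induction w1 arbitrary: x y w2)
  case (Cons b1 w1)
  then obtain b2 w2' where w2: "w2 = b2 # w2'" by (cases w2) auto
  have "2 * x + b1 = 2 * y + b2 \<and> w1 = w2'"
    using Cons.IH[of w2' "2 * x + b1" "2 * y + b2"] Cons.prems w2 by (simp add: binary_value_def)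
  moreover have "b1 \<le> 1" "b2 \<le> 1" using Cons.prems w2 by auto
  ultimately have "x = y \<and> b1 = b2" by (auto; presburger)
  with \<open>2 * x + b1 = 2 * y + b2 \<and> w1 = w2'\<close> show ?case using w2 by simp
qed (simp add: binary_value_def)

text \<open>Two different binary words of equal length reach different values \<open>v1 \<noteq> v2\<close>;
  appending \<open>v1 - 1\<close> decrements then accepts the first and rejects the second.\<close>

lemma counter_distinguishes:
  assumes w: "w1 \<in> lists {0, 1}" "w2 \<in> lists {0, 1}" "length w1 = length w2" "w1 \<noteq> w2"
  shows "\<exists>z \<in> lists {0, 1, 2}. accepts counter (w1 @ z) \<noteq> accepts counter (w2 @ z)"
proof
  define z where "z = replicate (binary_value 1 w1 - 1) (2::nat)"
  show "z \<in> lists {0, 1, 2}" by (auto simp: z_def in_lists_conv_set)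
  have final_value: "foldl counter_step 1 (w @ z) = of_nat (binary_value 1 w) - of_nat (binary_value 1 w1 - 1)"
    if "w \<in> lists {0, 1}" for w
    using foldl_counter_step_binary[of w 1] that
    by (auto simp: z_def foldl_counter_step_decrement)
  have "binary_value 1 w1 \<ge> 1" by (rule le_binary_value)
  moreover have "binary_value 1 w1 \<noteq> binary_value 1 w2"
    using binary_value_inj w by blast
  ultimately show "accepts counter (w1 @ z) \<noteq> accepts counter (w2 @ z)"
    using final_value[OF w(1)] final_value[OF w(2)] by (simp add: accepts_counter of_nat_diff)
qed

lemma counter_lang_not_rtDVA1: "({0, 1, 2}, lang {0, 1, 2} counter) \<notin> rtDVA_langs 1"
proof
  assume "({0, 1, 2}, lang {0, 1, 2} counter) \<in> rtDVA_langs 1"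
  then obtain M where M: "is_rtDVA 1 {0, 1, 2} M" and L: "lang {0, 1, 2} counter = lang {0, 1, 2} M"
    by (auto simp: rtDVA_langs_def)
  have same: "accepts M u = accepts counter u" if "u \<in> lists {0, 1, 2}" for u
    using L that unfolding lang_def by blast
  define W where "W n = {w. set w \<subseteq> {0::nat, 1} \<and> length w = n}" for n
  have distinguishable: "\<exists>z. accepts M (w1 @ z) \<noteq> accepts M (w2 @ z)"
    if w: "w1 \<in> W n" "w2 \<in> W n" "w1 \<noteq> w2" for w1 w2 n
  proof -
    obtain z where z: "z \<in> lists {0, 1, 2}" "accepts counter (w1 @ z) \<noteq> accepts counter (w2 @ z)"
      using counter_distinguishes[of w1 w2] w unfolding W_def by auto
    moreover have "w1 @ z \<in> lists {0, 1, 2}" "w2 @ z \<in> lists {0, 1, 2}"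
      using w z(1) unfolding W_def by auto
    ultimately show ?thesis using same by metis
  qed
  have "card (W n) \<le> card (states M) * (n + 2) ^ card (entry_factors {0, 1, 2} M)" for n
    by (rule rtDVA1_card_distinguishable[OF M _ _ _ distinguishable]) (auto simp: W_def)
  moreover have "card (W n) = 2 ^ n" for n
    using card_lists_length_eq[of "{0::nat, 1}" n] by (simp add: W_def numeral_2_eq_2)
  moreover obtain n where "card (states M) * (n + 2) ^ card (entry_factors {0, 1, 2} M) < 2 ^ n"
    using exists_pow2_gt_poly by blast
  ultimately show False by (metis leD)
qed

theorem corollary1:
  shows "rtDVA_langs 1 \<subset> rtDVA_langs 2"
proof -
  have "({0, 1, 2}, lang {0, 1, 2} counter) \<in> rtDVA_langs 2"
    using is_rtDVA_counter unfolding rtDVA_langs_def by blast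
  moreover have "rtDVA_langs 1 \<subseteq> rtDVA_langs 2"
    by (rule rtDVA_langs_mono) simp_all
  ultimately show ?thesis
    using counter_lang_not_rtDVA1 by blast
qed

end
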